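(* Let $\Omega$ be an open subset of $\mathbb H^n=\{(x',x^n):x^n\ge0\}$ meeting $\{x^n=0\}$, and set $\Gamma=\Omega\cap\{x^n=0\}$. Let $H_1,H_2$ be smooth positive definite symmetric matrix fields (Riemannian metrics) on $\Omega$ of the form $$H_i(x',x^n)=(dx^n)^2+h_i(x',x^n),\quad i=1,2,$$ with $H_1=H_2+\mathcal O((x^n)^\infty)$ on $\Gamma$. Let $f_1,f_2$ be functions on $\Omega$ with $L_{H_i}f_i=0$ in $\{x^n>0\}\cap\Omega$, $i=1,2$, having the same $C^\infty$ smooth Cauchy data on $\Gamma$: $f_1=f_2$ and $\partial_{x^n}f_1=\partial_{x^n}f_2$ on $\Gamma$. Then $f_1=f_2+\mathcal O((x^n)^\infty)$ on $\Gamma$.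
   Context: $L_H=-\Delta_H+\frac{n-2}{4(n-1)}S_H$ is the conformal Laplacian of the metric $H$ ($\Delta_H$ the Laplace–Beltrami operator, $S_H$ the scalar curvature). For functions or tensors $A,B$, "$A=B+\mathcal O((x^n)^\infty)$ on $\Gamma$" means that $\partial^j_{x^n}(A-B)$ (componentwise) vanishes on $\Gamma$ for all $j\ge0$. *)

theory Defs
  imports "HOL-Analysis.Analysis"
begin

text \<open>Coordinates: points of R^n are vectors x :: real^'n; the distinguished
  normal coordinate x^n is the component x $ nn for a fixed index nn.\<close>

definition half_space :: "'n \<Rightarrow> (real^'n) set" where
  "half_space nn = {x. x $ nn \<ge> 0}"

text \<open>Partial derivative in direction i, taken within the domain Omega
  (one-sided at boundary points of the half space).\<close>
definition pd :: "(real^'n) set \<Rightarrow> 'n \<Rightarrow> (real^'n \<Rightarrow> real) \<Rightarrow> real^'n \<Rightarrow> real" where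
  "pd \<Omega> i f x = (SOME D. ((\<lambda>t. f (x + t *\<^sub>R axis i 1)) has_real_derivative D)
                       (at 0 within {t. x + t *\<^sub>R axis i 1 \<in> \<Omega>}))"

definition has_pd :: "(real^'n) set \<Rightarrow> 'n \<Rightarrow> (real^'n \<Rightarrow> real) \<Rightarrow> real^'n \<Rightarrow> bool" where
  "has_pd \<Omega> i f x \<longleftrightarrow> (\<exists>D. ((\<lambda>t. f (x + t *\<^sub>R axis i 1)) has_real_derivative D)
                       (at 0 within {t. x + t *\<^sub>R axis i 1 \<in> \<Omega>}))"

fun pds :: "(real^'n) set \<Rightarrow> 'n list \<Rightarrow> (real^'n \<Rightarrow> real) \<Rightarrow> real^'n \<Rightarrow> real" where
  "pds \<Omega> [] f = f"
| "pds \<Omega> (i # is) f = pd \<Omega> i (pds \<Omega> is f)"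

definition smooth_on :: "(real^'n) set \<Rightarrow> (real^'n \<Rightarrow> real) \<Rightarrow> bool" where
  "smooth_on \<Omega> f \<longleftrightarrow> (\<forall>is. continuous_on \<Omega> (pds \<Omega> is f) \<and>
                          (\<forall>i. \<forall>x\<in>\<Omega>. has_pd \<Omega> i (pds \<Omega> is f) x))"

definition riem_metric :: "(real^'n) set \<Rightarrow> (real^'n \<Rightarrow> real^'n^'n) \<Rightarrow> bool" where
  "riem_metric \<Omega> H \<longleftrightarrow>
     (\<forall>a b. smooth_on \<Omega> (\<lambda>y. H y $ a $ b)) \<and>
     (\<forall>x\<in>\<Omega>. \<forall>a b. H x $ a $ b = H x $ b $ a) \<and>
     (\<forall>x\<in>\<Omega>. \<forall>v. v \<noteq> 0 \<longrightarrow> v \<bullet> (H x *v v) > 0)"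

text \<open>H = (dx^n)^2 + h(x',x^n): no cross terms with dx^n, and H_nn = 1.\<close>
definition normal_form_metric :: "'n \<Rightarrow> (real^'n) set \<Rightarrow> (real^'n \<Rightarrow> real^'n^'n) \<Rightarrow> bool" where
  "normal_form_metric nn \<Omega> H \<longleftrightarrow>
     (\<forall>x\<in>\<Omega>. H x $ nn $ nn = 1 \<and>
        (\<forall>k. k \<noteq> nn \<longrightarrow> H x $ nn $ k = 0 \<and> H x $ k $ nn = 0))"

definition laplace_beltrami ::
  "(real^'n) set \<Rightarrow> (real^'n \<Rightarrow> real^'n^'n) \<Rightarrow> (real^'n \<Rightarrow> real) \<Rightarrow> real^'n \<Rightarrow> real" where
  "laplace_beltrami \<Omega> H f x =
     (1 / sqrt (det (H x))) *
     (\<Sum>i\<in>UNIV. pd \<Omega> i (\<lambda>y. sqrt (det (H y)) *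
          (\<Sum>j\<in>UNIV. matrix_inv (H y) $ i $ j * pd \<Omega> j f y)) x)"

definition christoffel ::
  "(real^'n) set \<Rightarrow> (real^'n \<Rightarrow> real^'n^'n) \<Rightarrow> 'n \<Rightarrow> 'n \<Rightarrow> 'n \<Rightarrow> real^'n \<Rightarrow> real" where
  "christoffel \<Omega> H k i j x =
     1/2 * (\<Sum>l\<in>UNIV. matrix_inv (H x) $ k $ l *
        (pd \<Omega> i (\<lambda>y. H y $ j $ l) x + pd \<Omega> j (\<lambda>y. H y $ i $ l) x
         - pd \<Omega> l (\<lambda>y. H y $ i $ j) x))"

definition ricci ::
  "(real^'n) set \<Rightarrow> (real^'n \<Rightarrow> real^'n^'n) \<Rightarrow> 'n \<Rightarrow> 'n \<Rightarrow> real^'n \<Rightarrow> real" where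
  "ricci \<Omega> H i j x =
     (\<Sum>k\<in>UNIV. pd \<Omega> k (christoffel \<Omega> H k i j) x - pd \<Omega> j (christoffel \<Omega> H k i k) x
        + (\<Sum>l\<in>UNIV. christoffel \<Omega> H k k l x * christoffel \<Omega> H l i j x
                    - christoffel \<Omega> H k j l x * christoffel \<Omega> H l i k x))"

definition scalar_curvature ::
  "(real^'n) set \<Rightarrow> (real^'n \<Rightarrow> real^'n^'n) \<Rightarrow> real^'n \<Rightarrow> real" where
  "scalar_curvature \<Omega> H x =
     (\<Sum>i\<in>UNIV. \<Sum>j\<in>UNIV. matrix_inv (H x) $ i $ j * ricci \<Omega> H i j x)"

definition conformal_laplacian ::
  "(real^'n) set \<Rightarrow> (real^'n \<Rightarrow> real^'n^'n) \<Rightarrow> (real^'n \<Rightarrow> real) \<Rightarrow> real^'n \<Rightarrow> real" where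
  "conformal_laplacian \<Omega> H f x =
     - laplace_beltrami \<Omega> H f x
     + (real CARD('n) - 2) / (4 * (real CARD('n) - 1)) * scalar_curvature \<Omega> H x * f x"

end

theory Submission
  imports Defs
begin

text \<open>
  In coordinates where \<open>H = (dx\<^sup>n)\<^sup>2 + h\<close>, the row \<open>H\<^sup>n\<^sup>j\<close> of the inverse metric is the unit
  row, so the equation \<open>L\<^sub>H f = 0\<close> can be solved for \<open>\<partial>\<^sub>n\<^sup>2 f\<close>: it equals an expression built
  by sums, products, quotients and square roots from the metric, its derivatives, \<open>f\<close>, \<open>\<partial>\<^sub>n f\<close>
  and tangential derivatives of quantities involving only first derivatives of \<open>f\<close>. Say that
  two smooth functions agree to order \<open>j\<close> if their normal derivatives of order \<open>\<le> j\<close> coincide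
  on \<open>\<Gamma>\<close>. This relation is preserved by the algebraic operations (Leibniz rule), by
  tangential derivatives (they commute with \<open>\<partial>\<^sub>n\<close>), and \<open>\<partial>\<^sub>n\<close> lowers the order by one. Since
  \<open>H\<^sub>1\<close> and \<open>H\<^sub>2\<close> agree to infinite order, and \<open>L\<^sub>H\<^sub>1 f\<^sub>1\<close>, \<open>L\<^sub>H\<^sub>2 f\<^sub>2\<close> vanish in the interior
  (hence, by continuity, together with all their derivatives on \<open>\<Gamma>\<close>), agreement of \<open>f\<^sub>1, f\<^sub>2\<close>
  to order \<open>j + 1\<close> yields agreement of \<open>\<partial>\<^sub>n\<^sup>2 f\<^sub>1, \<partial>\<^sub>n\<^sup>2 f\<^sub>2\<close> to order \<open>j\<close>, i.e. of
  \<open>f\<^sub>1, f\<^sub>2\<close> to order \<open>j + 2\<close>. Induction starts from the Cauchy data.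
\<close>

section \<open>Partial derivatives within a half-space domain\<close>

text \<open>Unlike \<open>DERIV_real_sqrt_generic\<close> this needs no case split on the sign of \<open>z\<close>, so the
  derivative of \<open>sqrt \<circ> f\<close> is a product of functions whose smoothness is already known.\<close>
lemma DERIV_real_sqrt_nonzero:
  fixes z :: real
  assumes "z \<noteq> 0"
  shows "DERIV sqrt z :> sqrt z * inverse z / 2"
proof (rule DERIV_real_sqrt_generic[OF assms])
  assume z: "z > 0"
  have e: "z = sqrt z * sqrt z" using z by simp
  have "sqrt z > 0" using z by simp
  then show "sqrt z * inverse z / 2 = inverse (sqrt z) / 2"
    by (subst e) (simp add: field_simps)
next
  assume z: "z < 0"
  have e: "z = - (sqrt (-z) * sqrt (-z))" using z by simp
  have "sqrt (-z) > 0" using z by simp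
  moreover have "sqrt z = - sqrt (- z)" by (simp add: real_sqrt_minus)
  ultimately show "sqrt z * inverse z / 2 = - inverse (sqrt z) / 2"
    by (subst e) (simp add: field_simps)
qed

locale half_space_domain =
  fixes nn :: "'n::finite" and \<Omega> :: "(real^'n) set"
  assumes openin_half_space: "openin (top_of_set (half_space nn)) \<Omega>"
begin

lemma normal_coordinate_nonneg: "x \<in> \<Omega> \<Longrightarrow> x $ nn \<ge> 0"
  using openin_half_space openin_imp_subset unfolding half_space_def by blast

lemma half_ball_subset:
  "x \<in> \<Omega> \<Longrightarrow> \<exists>e>0. \<forall>y. y $ nn \<ge> 0 \<longrightarrow> dist y x < e \<longrightarrow> y \<in> \<Omega>"
  using openin_half_space unfolding openin_euclidean_subtopology_iff half_space_def by auto

lemma has_pd_derivative: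
  assumes "has_pd \<Omega> i f x"
  shows "((\<lambda>t. f (x + t *\<^sub>R axis i 1)) has_real_derivative pd \<Omega> i f x)
           (at 0 within {t. x + t *\<^sub>R axis i 1 \<in> \<Omega>})"
  using assms unfolding has_pd_def pd_def by (rule someI_ex)

lemma axis_line_nontrivial:
  assumes "x \<in> \<Omega>"
  shows "at 0 within {t. x + t *\<^sub>R axis i 1 \<in> \<Omega>} \<noteq> bot"
proof -
  obtain e where e: "e > 0" "\<forall>y. y $ nn \<ge> 0 \<longrightarrow> dist y x < e \<longrightarrow> y \<in> \<Omega>"
    using half_ball_subset assms by blast
  have "{0<..<e} \<subseteq> {t. x + t *\<^sub>R axis i 1 \<in> \<Omega>}"
  proof
    fix t :: real assume t: "t \<in> {0<..<e}"
    have "(x + t *\<^sub>R axis i 1) $ nn \<ge> 0"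
      using normal_coordinate_nonneg[OF assms] t by (auto simp: axis_def)
    moreover have "dist (x + t *\<^sub>R axis i 1) x < e" using t by (simp add: dist_norm)
    ultimately show "t \<in> {t. x + t *\<^sub>R axis i 1 \<in> \<Omega>}" using e by auto
  qed
  moreover have "(0::real) islimpt {0<..<e}" using e islimpt_greaterThanLessThan1 by blast
  ultimately show ?thesis using islimpt_subset trivial_limit_within by blast
qed

lemma pd_eqI:
  assumes "x \<in> \<Omega>"
    and "((\<lambda>t. f (x + t *\<^sub>R axis i 1)) has_real_derivative D)
           (at 0 within {t. x + t *\<^sub>R axis i 1 \<in> \<Omega>})"
  shows "has_pd \<Omega> i f x \<and> pd \<Omega> i f x = D"
proof
  show "has_pd \<Omega> i f x" using assms(2) unfolding has_pd_def by blast
  from has_field_derivative_unique[OF has_pd_derivative[OF this] assms(2)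
      axis_line_nontrivial[OF assms(1)]]
  show "pd \<Omega> i f x = D" .
qed

lemma
  assumes "x \<in> \<Omega>" "\<forall>y\<in>\<Omega>. f y = g y"
  shows has_pd_cong: "has_pd \<Omega> i f x = has_pd \<Omega> i g x"
    and pd_cong: "pd \<Omega> i f x = pd \<Omega> i g x"
proof -
  have "((\<lambda>t. f (x + t *\<^sub>R axis i 1)) has_real_derivative D)
           (at 0 within {t. x + t *\<^sub>R axis i 1 \<in> \<Omega>}) \<longleftrightarrow>
        ((\<lambda>t. g (x + t *\<^sub>R axis i 1)) has_real_derivative D)
           (at 0 within {t. x + t *\<^sub>R axis i 1 \<in> \<Omega>})" for D
    using assms by (intro has_field_derivative_cong_eventually) (auto simp: eventually_at_filter)
  then show "has_pd \<Omega> i f x = has_pd \<Omega> i g x" "pd \<Omega> i f x = pd \<Omega> i g x"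
    unfolding has_pd_def pd_def by simp_all
qed

lemma pds_append: "pds \<Omega> (xs @ ys) f = pds \<Omega> xs (pds \<Omega> ys f)"
  by (induction xs) auto

lemma pds_replicate_Suc:
  "pds \<Omega> (replicate (Suc m) i) f = pds \<Omega> (replicate m i) (pd \<Omega> i f)"
  by (simp flip: replicate_append_same add: pds_append)

lemma pds_cong: "\<forall>y\<in>\<Omega>. f y = g y \<Longrightarrow> x \<in> \<Omega> \<Longrightarrow> pds \<Omega> is f x = pds \<Omega> is g x"
  by (induction "is" arbitrary: x) (auto intro: pd_cong)

lemma pd_const: "x \<in> \<Omega> \<Longrightarrow> has_pd \<Omega> i (\<lambda>_. c) x \<and> pd \<Omega> i (\<lambda>_. c) x = 0"
  using pd_eqI[OF _ DERIV_const] .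

lemma pd_lin:
  assumes "x \<in> \<Omega>" "has_pd \<Omega> i f x" "has_pd \<Omega> i g x"
  shows "has_pd \<Omega> i (\<lambda>y. a * f y + b * g y) x \<and>
     pd \<Omega> i (\<lambda>y. a * f y + b * g y) x = a * pd \<Omega> i f x + b * pd \<Omega> i g x"
  using pd_eqI[OF assms(1) DERIV_add[OF DERIV_cmult[OF has_pd_derivative[OF assms(2)]]
      DERIV_cmult[OF has_pd_derivative[OF assms(3)]]]] .

lemma pd_mult:
  assumes "x \<in> \<Omega>" "has_pd \<Omega> i f x" "has_pd \<Omega> i g x"
  shows "has_pd \<Omega> i (\<lambda>y. f y * g y) x \<and>
         pd \<Omega> i (\<lambda>y. f y * g y) x = pd \<Omega> i f x * g x + f x * pd \<Omega> i g x"
  using DERIV_mult[OF has_pd_derivative[OF assms(2)] has_pd_derivative[OF assms(3)]]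
    pd_eqI[OF assms(1)] by (simp add: mult.commute)

lemma pd_inverse:
  assumes "x \<in> \<Omega>" "has_pd \<Omega> i f x" "f x \<noteq> 0"
  shows "has_pd \<Omega> i (\<lambda>y. inverse (f y)) x \<and>
         pd \<Omega> i (\<lambda>y. inverse (f y)) x = - (pd \<Omega> i f x * (inverse (f x) * inverse (f x)))"
  using DERIV_inverse_fun[OF has_pd_derivative[OF assms(2)]] assms(3) pd_eqI[OF assms(1)]
  by (simp add: power2_eq_square)

lemma pd_sqrt:
  assumes "x \<in> \<Omega>" "has_pd \<Omega> i f x" "f x \<noteq> 0"
  shows "has_pd \<Omega> i (\<lambda>y. sqrt (f y)) x \<and>
         pd \<Omega> i (\<lambda>y. sqrt (f y)) x = pd \<Omega> i f x * (sqrt (f x) * inverse (f x) / 2)"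
proof -
  have "DERIV sqrt ((\<lambda>t. f (x + t *\<^sub>R axis i 1)) 0) :> sqrt (f x) * inverse (f x) / 2"
    using DERIV_real_sqrt_nonzero[OF assms(3)] by simp
  from pd_eqI[OF assms(1) DERIV_chain2[OF this has_pd_derivative[OF assms(2)]]]
  show ?thesis by (simp add: mult.commute)
qed

section \<open>Smooth functions\<close>

fun smooth_upto :: "nat \<Rightarrow> (real^'n \<Rightarrow> real) \<Rightarrow> bool" where
  "smooth_upto 0 f \<longleftrightarrow> continuous_on \<Omega> f \<and> (\<forall>i. \<forall>x\<in>\<Omega>. has_pd \<Omega> i f x)"
| "smooth_upto (Suc n) f \<longleftrightarrow> smooth_upto 0 f \<and> (\<forall>i. smooth_upto n (pd \<Omega> i f))"

lemma smooth_upto_iff: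
  "smooth_upto n f \<longleftrightarrow> (\<forall>is. length is \<le> n \<longrightarrow>
     continuous_on \<Omega> (pds \<Omega> is f) \<and> (\<forall>i. \<forall>x\<in>\<Omega>. has_pd \<Omega> i (pds \<Omega> is f) x))"
proof (induction n arbitrary: f)
  case 0
  then show ?case by auto
next
  case (Suc n)
  show ?case
  proof
    assume f: "smooth_upto (Suc n) f"
    show "\<forall>is. length is \<le> Suc n \<longrightarrow>
      continuous_on \<Omega> (pds \<Omega> is f) \<and> (\<forall>i. \<forall>x\<in>\<Omega>. has_pd \<Omega> i (pds \<Omega> is f) x)"
    proof (intro allI impI)
      fix "is" :: "'n list" assume "length is \<le> Suc n"
      then show "continuous_on \<Omega> (pds \<Omega> is f) \<and> (\<forall>i. \<forall>x\<in>\<Omega>. has_pd \<Omega> i (pds \<Omega> is f) x)"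
        using f Suc.IH by (cases "is" rule: rev_cases) (auto simp: pds_append)
    qed
  next
    assume f: "\<forall>is. length is \<le> Suc n \<longrightarrow>
      continuous_on \<Omega> (pds \<Omega> is f) \<and> (\<forall>i. \<forall>x\<in>\<Omega>. has_pd \<Omega> i (pds \<Omega> is f) x)"
    have "smooth_upto n (pd \<Omega> i f)" for i
      unfolding Suc.IH using f[rule_format, of "_ @ [i]"] by (simp add: pds_append)
    then show "smooth_upto (Suc n) f" using f[rule_format, of "[]"] by simp
  qed
qed

lemma smooth_on_iff_smooth_upto: "smooth_on \<Omega> f \<longleftrightarrow> (\<forall>n. smooth_upto n f)"
  unfolding smooth_on_def smooth_upto_iff by blast

lemma smooth_upto_Suc_imp: "smooth_upto (Suc n) f \<Longrightarrow> smooth_upto n f"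
  by (induction n arbitrary: f) auto

lemma smooth_upto_cong: "smooth_upto n f \<Longrightarrow> \<forall>y\<in>\<Omega>. f y = g y \<Longrightarrow> smooth_upto n g"
proof (induction n arbitrary: f g)
  case 0
  then show ?case using has_pd_cong continuous_on_cong by (metis smooth_upto.simps(1))
next
  case (Suc n)
  then have "smooth_upto n (pd \<Omega> i g)" for i
    using Suc.IH[of "pd \<Omega> i f" "pd \<Omega> i g"] pd_cong by auto
  then show ?case
    using Suc.prems has_pd_cong continuous_on_cong by (metis smooth_upto.simps)
qed

lemma smooth_upto_const: "smooth_upto n (\<lambda>_. c)"
proof (induction n arbitrary: c)
  case 0
  then show ?case using pd_const by auto
next
  case (Suc n)
  then have "smooth_upto n (pd \<Omega> i (\<lambda>_. c))" for i
    using smooth_upto_cong[OF Suc.IH[of 0]] pd_const by auto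
  then show ?case using pd_const by auto
qed

lemma smooth_upto_lin:
  "smooth_upto n f \<Longrightarrow> smooth_upto n g \<Longrightarrow> smooth_upto n (\<lambda>y. a * f y + b * g y)"
proof (induction n arbitrary: f g)
  case 0
  then show ?case using pd_lin by (auto intro!: continuous_intros)
next
  case (Suc n)
  then have "smooth_upto n (pd \<Omega> i (\<lambda>y. a * f y + b * g y))" for i
    using smooth_upto_cong[OF Suc.IH[of "pd \<Omega> i f" "pd \<Omega> i g"]] pd_lin by auto
  moreover have "smooth_upto 0 (\<lambda>y. a * f y + b * g y)"
    using Suc.prems pd_lin by (auto intro!: continuous_intros)
  ultimately show ?case by simp
qed

lemma smooth_upto_mult:
  "smooth_upto n f \<Longrightarrow> smooth_upto n g \<Longrightarrow> smooth_upto n (\<lambda>y. f y * g y)"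
proof (induction n arbitrary: f g)
  case 0
  then show ?case using pd_mult by (auto intro: continuous_on_mult)
next
  case (Suc n)
  have f0: "smooth_upto 0 f" and g0: "smooth_upto 0 g"
    using Suc.prems by auto
  have "smooth_upto n (pd \<Omega> i (\<lambda>y. f y * g y))" for i
  proof (rule smooth_upto_cong)
    show "smooth_upto n (\<lambda>y. 1 * (pd \<Omega> i f y * g y) + 1 * (f y * pd \<Omega> i g y))"
      using Suc smooth_upto_Suc_imp by (intro smooth_upto_lin Suc.IH) auto
    show "\<forall>y\<in>\<Omega>. 1 * (pd \<Omega> i f y * g y) + 1 * (f y * pd \<Omega> i g y) = pd \<Omega> i (\<lambda>y. f y * g y) y"
      using pd_mult f0 g0 by simp
  qed
  moreover have "smooth_upto 0 (\<lambda>y. f y * g y)"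
    using f0 g0 pd_mult by (auto intro: continuous_on_mult)
  ultimately show ?case by simp
qed

lemma smooth_upto_inverse:
  "smooth_upto n f \<Longrightarrow> \<forall>x\<in>\<Omega>. f x \<noteq> 0 \<Longrightarrow> smooth_upto n (\<lambda>y. inverse (f y))"
proof (induction n)
  case 0
  then show ?case using pd_inverse by (auto intro: continuous_on_inverse)
next
  case (Suc n)
  have f0: "smooth_upto 0 f" and fn: "smooth_upto n f"
    using Suc.prems smooth_upto_Suc_imp by auto
  have "smooth_upto n (pd \<Omega> i (\<lambda>y. inverse (f y)))" for i
  proof (rule smooth_upto_cong)
    show "smooth_upto n (\<lambda>y. (\<lambda>_. -1) y * (pd \<Omega> i f y * (inverse (f y) * inverse (f y))))"
      using Suc fn by (intro smooth_upto_mult smooth_upto_const) auto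
    show "\<forall>y\<in>\<Omega>. (\<lambda>_. -1) y * (pd \<Omega> i f y * (inverse (f y) * inverse (f y)))
          = pd \<Omega> i (\<lambda>y. inverse (f y)) y"
      using pd_inverse f0 Suc.prems(2) by simp
  qed
  moreover have "smooth_upto 0 (\<lambda>y. inverse (f y))"
    using f0 Suc.prems(2) pd_inverse by (auto intro: continuous_on_inverse)
  ultimately show ?case by simp
qed

lemma smooth_upto_sqrt:
  "smooth_upto n f \<Longrightarrow> \<forall>x\<in>\<Omega>. f x \<noteq> 0 \<Longrightarrow> smooth_upto n (\<lambda>y. sqrt (f y))"
proof (induction n)
  case 0
  then show ?case using pd_sqrt by (auto intro: continuous_on_real_sqrt)
next
  case (Suc n)
  have f0: "smooth_upto 0 f" and fn: "smooth_upto n f"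
    using Suc.prems smooth_upto_Suc_imp by auto
  have "smooth_upto n (pd \<Omega> i (\<lambda>y. sqrt (f y)))" for i
  proof (rule smooth_upto_cong)
    show "smooth_upto n (\<lambda>y. pd \<Omega> i f y * ((sqrt (f y) * inverse (f y)) * (\<lambda>_. 1/2) y))"
      using Suc fn smooth_upto_inverse
      by (intro smooth_upto_mult smooth_upto_const) auto
    show "\<forall>y\<in>\<Omega>. pd \<Omega> i f y * ((sqrt (f y) * inverse (f y)) * (\<lambda>_. 1/2) y)
          = pd \<Omega> i (\<lambda>y. sqrt (f y)) y"
      using pd_sqrt f0 Suc.prems(2) by simp
  qed
  moreover have "smooth_upto 0 (\<lambda>y. sqrt (f y))"
    using f0 Suc.prems(2) pd_sqrt by (auto intro: continuous_on_real_sqrt)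
  ultimately show ?case by simp
qed

lemma smooth_on_const: "smooth_on \<Omega> (\<lambda>_. c)"
  unfolding smooth_on_iff_smooth_upto using smooth_upto_const by blast

lemma smooth_on_lin:
  "smooth_on \<Omega> f \<Longrightarrow> smooth_on \<Omega> g \<Longrightarrow> smooth_on \<Omega> (\<lambda>y. a * f y + b * g y)"
  unfolding smooth_on_iff_smooth_upto using smooth_upto_lin by blast

lemma smooth_on_diff: "smooth_on \<Omega> f \<Longrightarrow> smooth_on \<Omega> g \<Longrightarrow> smooth_on \<Omega> (\<lambda>y. f y - g y)"
  using smooth_on_lin[of f g 1 "-1"] by simp

lemma smooth_on_mult: "smooth_on \<Omega> f \<Longrightarrow> smooth_on \<Omega> g \<Longrightarrow> smooth_on \<Omega> (\<lambda>y. f y * g y)"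
  unfolding smooth_on_iff_smooth_upto using smooth_upto_mult by blast

lemma smooth_on_inverse:
  "smooth_on \<Omega> f \<Longrightarrow> \<forall>x\<in>\<Omega>. f x \<noteq> 0 \<Longrightarrow> smooth_on \<Omega> (\<lambda>y. inverse (f y))"
  unfolding smooth_on_iff_smooth_upto using smooth_upto_inverse by blast

lemma smooth_on_sqrt:
  "smooth_on \<Omega> f \<Longrightarrow> \<forall>x\<in>\<Omega>. f x \<noteq> 0 \<Longrightarrow> smooth_on \<Omega> (\<lambda>y. sqrt (f y))"
  unfolding smooth_on_iff_smooth_upto using smooth_upto_sqrt by blast

lemma smooth_on_cong: "smooth_on \<Omega> f \<Longrightarrow> \<forall>y\<in>\<Omega>. f y = g y \<Longrightarrow> smooth_on \<Omega> g"
  unfolding smooth_on_iff_smooth_upto using smooth_upto_cong by blast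

lemma smooth_on_pd: "smooth_on \<Omega> f \<Longrightarrow> smooth_on \<Omega> (pd \<Omega> i f)"
  unfolding smooth_on_iff_smooth_upto by (metis smooth_upto.simps(2))

lemma smooth_on_pds: "smooth_on \<Omega> f \<Longrightarrow> smooth_on \<Omega> (pds \<Omega> is f)"
  by (induction "is") (auto intro: smooth_on_pd)

lemma smooth_on_imp_has_pd: "smooth_on \<Omega> f \<Longrightarrow> x \<in> \<Omega> \<Longrightarrow> has_pd \<Omega> i f x"
  unfolding smooth_on_def by (metis pds.simps(1))

lemma smooth_on_imp_continuous_on: "smooth_on \<Omega> f \<Longrightarrow> continuous_on \<Omega> f"
  unfolding smooth_on_def by (metis pds.simps(1))

lemma pd_diff:
  "smooth_on \<Omega> f \<Longrightarrow> smooth_on \<Omega> g \<Longrightarrow> x \<in> \<Omega> \<Longrightarrow>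
    pd \<Omega> i (\<lambda>y. f y - g y) x = pd \<Omega> i f x - pd \<Omega> i g x"
  using pd_lin[of x i f g 1 "-1"] by (simp add: smooth_on_imp_has_pd)

lemma pds_lin:
  assumes "smooth_on \<Omega> f" "smooth_on \<Omega> g" "x \<in> \<Omega>"
  shows "pds \<Omega> is (\<lambda>y. a * f y + b * g y) x = a * pds \<Omega> is f x + b * pds \<Omega> is g x"
  using assms(3)
proof (induction "is" arbitrary: x)
  case (Cons i "is")
  have "pds \<Omega> (i # is) (\<lambda>y. a * f y + b * g y) x =
        pd \<Omega> i (\<lambda>y. a * pds \<Omega> is f y + b * pds \<Omega> is g y) x"
    using pd_cong[OF Cons.prems] Cons.IH by simp
  also have "\<dots> = a * pds \<Omega> (i # is) f x + b * pds \<Omega> (i # is) g x"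
    using pd_lin Cons.prems assms(1,2) by (simp add: smooth_on_imp_has_pd smooth_on_pds)
  finally show ?case .
qed simp

section \<open>Symmetry of second derivatives\<close>

lemma has_real_derivative_along_axis:
  assumes "\<forall>s\<in>S. p + s *\<^sub>R axis i 1 \<in> \<Omega>" "\<forall>s\<in>S. has_pd \<Omega> i F (p + s *\<^sub>R axis i 1)" "t \<in> S"
  shows "((\<lambda>s. F (p + s *\<^sub>R axis i 1)) has_real_derivative pd \<Omega> i F (p + t *\<^sub>R axis i 1))
           (at t within S)"
proof -
  define y where "y = p + t *\<^sub>R axis i 1"
  define g where "g = (\<lambda>s::real. s - t)"
  have shift: "y + (s - t) *\<^sub>R axis i 1 = p + s *\<^sub>R axis i 1" for s
    by (simp add: y_def algebra_simps)
  have "((\<lambda>s. F (y + s *\<^sub>R axis i 1)) has_real_derivative pd \<Omega> i F y)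
           (at 0 within {s. y + s *\<^sub>R axis i 1 \<in> \<Omega>})"
    using has_pd_derivative assms y_def by blast
  moreover have "g ` S \<subseteq> {s. y + s *\<^sub>R axis i 1 \<in> \<Omega>}"
    using assms(1) shift by (auto simp: g_def)
  ultimately have "((\<lambda>s. F (y + s *\<^sub>R axis i 1)) has_real_derivative pd \<Omega> i F y)
      (at (g t) within g ` S)"
    by (simp add: DERIV_subset g_def)
  moreover have "(g has_real_derivative 1) (at t within S)"
    unfolding g_def using DERIV_diff[OF DERIV_ident DERIV_const] by simp
  ultimately have "((\<lambda>s. F (y + s *\<^sub>R axis i 1)) \<circ> g
      has_real_derivative pd \<Omega> i F y * 1) (at t within S)"
    by (rule DERIV_image_chain)
  moreover have "(\<lambda>s. F (y + s *\<^sub>R axis i 1)) \<circ> g = (\<lambda>s. F (p + s *\<^sub>R axis i 1))"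
    using shift by (auto simp: g_def o_def)
  ultimately show ?thesis by (simp add: y_def)
qed

lemma mixed_difference_mvt:
  assumes F: "smooth_on \<Omega> F" and h: "h > 0"
    and square: "\<And>s t. 0 \<le> s \<Longrightarrow> s \<le> h \<Longrightarrow> 0 \<le> t \<Longrightarrow> t \<le> h \<Longrightarrow>
              x + s *\<^sub>R axis i 1 + t *\<^sub>R axis k 1 \<in> \<Omega>"
  shows "\<exists>\<sigma>\<in>{0..h}. \<exists>\<tau>\<in>{0..h}.
     F (x + h *\<^sub>R axis i 1 + h *\<^sub>R axis k 1) - F (x + h *\<^sub>R axis i 1) - F (x + h *\<^sub>R axis k 1) + F x
       = h * (h * pd \<Omega> k (pd \<Omega> i F) (x + \<sigma> *\<^sub>R axis i 1 + \<tau> *\<^sub>R axis k 1))"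
proof -
  let ?a = "axis i (1::real)" and ?b = "axis k (1::real)"
  let ?A = "pd \<Omega> i F"
  define \<phi> where "\<phi> = (\<lambda>s. F ((x + h *\<^sub>R ?b) + s *\<^sub>R ?a) - F (x + s *\<^sub>R ?a))"
  define D\<phi> where "D\<phi> = (\<lambda>s. ?A ((x + h *\<^sub>R ?b) + s *\<^sub>R ?a) - ?A (x + s *\<^sub>R ?a))"
  have top: "\<forall>s\<in>{0..h}. (x + h *\<^sub>R ?b) + s *\<^sub>R ?a \<in> \<Omega>"
    using square h by (auto simp: algebra_simps)
  have bottom: "\<forall>s\<in>{0..h}. x + s *\<^sub>R ?a \<in> \<Omega>"
    using square[of _ 0] h by auto
  have "\<exists>\<sigma>\<in>{0<..<h}. \<phi> h - \<phi> 0 = D\<phi> \<sigma> * (h - 0)"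
  proof (rule mvt_simple[OF h])
    fix s assume "0 \<le> s" "s \<le> h"
    then have "(\<phi> has_real_derivative D\<phi> s) (at s within {0..h})"
      unfolding \<phi>_def D\<phi>_def using top bottom F smooth_on_imp_has_pd
      by (intro DERIV_diff has_real_derivative_along_axis) auto
    then show "(\<phi> has_derivative (*) (D\<phi> s)) (at s within {0..h})"
      by (rule has_field_derivative_imp_has_derivative)
  qed
  then obtain \<sigma> where \<sigma>: "\<sigma> \<in> {0<..<h}" "\<phi> h - \<phi> 0 = D\<phi> \<sigma> * h" by auto
  define \<psi> where "\<psi> = (\<lambda>t. ?A ((x + \<sigma> *\<^sub>R ?a) + t *\<^sub>R ?b))"
  have middle: "\<forall>t\<in>{0..h}. (x + \<sigma> *\<^sub>R ?a) + t *\<^sub>R ?b \<in> \<Omega>"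
    using square \<sigma> by auto
  have "\<exists>\<tau>\<in>{0<..<h}. \<psi> h - \<psi> 0 = pd \<Omega> k ?A ((x + \<sigma> *\<^sub>R ?a) + \<tau> *\<^sub>R ?b) * (h - 0)"
  proof (rule mvt_simple[OF h])
    fix t assume "0 \<le> t" "t \<le> h"
    then have "(\<psi> has_real_derivative pd \<Omega> k ?A ((x + \<sigma> *\<^sub>R ?a) + t *\<^sub>R ?b)) (at t within {0..h})"
      unfolding \<psi>_def using middle F smooth_on_pd smooth_on_imp_has_pd
      by (intro has_real_derivative_along_axis) auto
    then show "(\<psi> has_derivative (*) (pd \<Omega> k ?A ((x + \<sigma> *\<^sub>R ?a) + t *\<^sub>R ?b))) (at t within {0..h})"
      by (rule has_field_derivative_imp_has_derivative)
  qed
  then obtain \<tau> where \<tau>: "\<tau> \<in> {0<..<h}"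
    "\<psi> h - \<psi> 0 = pd \<Omega> k ?A ((x + \<sigma> *\<^sub>R ?a) + \<tau> *\<^sub>R ?b) * h" by auto
  have "D\<phi> \<sigma> = \<psi> h - \<psi> 0" unfolding D\<phi>_def \<psi>_def by (simp add: algebra_simps)
  moreover have "\<phi> h - \<phi> 0 =
      F (x + h *\<^sub>R ?a + h *\<^sub>R ?b) - F (x + h *\<^sub>R ?a) - F (x + h *\<^sub>R ?b) + F x"
    unfolding \<phi>_def by (simp add: algebra_simps)
  ultimately show ?thesis
    using \<sigma> \<tau> by (intro bexI[of _ \<sigma>] bexI[of _ \<tau>]) (auto simp: algebra_simps)
qed

lemma axis_square_subset:
  assumes "x \<in> \<Omega>" "e > 0"
  obtains h where "h > 0" "\<And>s t p q. 0 \<le> s \<Longrightarrow> s \<le> h \<Longrightarrow> 0 \<le> t \<Longrightarrow> t \<le> h \<Longrightarrow>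
    x + s *\<^sub>R axis p 1 + t *\<^sub>R axis q 1 \<in> \<Omega> \<and> dist (x + s *\<^sub>R axis p 1 + t *\<^sub>R axis q 1) x < e"
proof -
  obtain r where r: "r > 0" "\<forall>y. y $ nn \<ge> 0 \<longrightarrow> dist y x < r \<longrightarrow> y \<in> \<Omega>"
    using half_ball_subset assms(1) by blast
  define h where "h = min r e / 3"
  have "h > 0" using r assms(2) by (simp add: h_def)
  moreover have "x + s *\<^sub>R axis p 1 + t *\<^sub>R axis q 1 \<in> \<Omega> \<and>
      dist (x + s *\<^sub>R axis p 1 + t *\<^sub>R axis q 1) x < e"
    if "0 \<le> s" "s \<le> h" "0 \<le> t" "t \<le> h" for s t p q
  proof -
    have "dist (x + s *\<^sub>R axis p 1 + t *\<^sub>R axis q 1) x = norm (s *\<^sub>R axis p (1::real) + t *\<^sub>R axis q 1)"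
      by (simp add: dist_norm)
    also have "\<dots> \<le> norm (s *\<^sub>R axis p (1::real)) + norm (t *\<^sub>R axis q (1::real))"
      by (rule norm_triangle_ineq)
    also have "\<dots> < min r e" using that r assms(2) by (simp add: h_def)
    finally have "dist (x + s *\<^sub>R axis p 1 + t *\<^sub>R axis q 1) x < min r e" .
    moreover have "(x + s *\<^sub>R axis p 1 + t *\<^sub>R axis q 1) $ nn \<ge> 0"
      using normal_coordinate_nonneg[OF assms(1)] that by (auto simp: axis_def)
    ultimately show ?thesis using r by auto
  qed
  ultimately show thesis by (rule that)
qed

text \<open>Schwarz's theorem: both mixed second derivatives are limits of the same second difference
  quotient over shrinking squares.\<close>
lemma pd_pd_commute:
  assumes F: "smooth_on \<Omega> F" and x: "x \<in> \<Omega>"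
  shows "pd \<Omega> k (pd \<Omega> i F) x = pd \<Omega> i (pd \<Omega> k F) x"
proof -
  let ?a = "axis i (1::real)" and ?b = "axis k (1::real)"
  let ?AB = "pd \<Omega> k (pd \<Omega> i F)" and ?BA = "pd \<Omega> i (pd \<Omega> k F)"
  have close: "\<bar>?AB x - ?BA x\<bar> < 2 * \<epsilon>" if "\<epsilon> > 0" for \<epsilon>
  proof -
    have "continuous_on \<Omega> ?AB" "continuous_on \<Omega> ?BA"
      using F by (auto intro!: smooth_on_imp_continuous_on smooth_on_pd)
    then obtain d1 d2 where d: "d1 > 0" "d2 > 0"
      "\<forall>y\<in>\<Omega>. dist y x < d1 \<longrightarrow> dist (?AB y) (?AB x) < \<epsilon>"
      "\<forall>y\<in>\<Omega>. dist y x < d2 \<longrightarrow> dist (?BA y) (?BA x) < \<epsilon>"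
      using x \<open>\<epsilon> > 0\<close> unfolding continuous_on_iff by blast
    have "min d1 d2 > 0" using d by simp
    then obtain h where h: "h > 0" and square: "\<And>s t p q. 0 \<le> s \<Longrightarrow> s \<le> h \<Longrightarrow> 0 \<le> t \<Longrightarrow> t \<le> h \<Longrightarrow>
        x + s *\<^sub>R axis p 1 + t *\<^sub>R axis q 1 \<in> \<Omega> \<and>
        dist (x + s *\<^sub>R axis p 1 + t *\<^sub>R axis q 1) x < min d1 d2"
      using axis_square_subset[OF x] by blast
    obtain \<sigma>1 \<tau>1 where st1: "\<sigma>1 \<in> {0..h}" "\<tau>1 \<in> {0..h}"
      "F (x + h *\<^sub>R ?a + h *\<^sub>R ?b) - F (x + h *\<^sub>R ?a) - F (x + h *\<^sub>R ?b) + F x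
         = h * (h * ?AB (x + \<sigma>1 *\<^sub>R ?a + \<tau>1 *\<^sub>R ?b))"
      using mixed_difference_mvt[OF F h, of x i k] square by blast
    obtain \<sigma>2 \<tau>2 where st2: "\<sigma>2 \<in> {0..h}" "\<tau>2 \<in> {0..h}"
      "F (x + h *\<^sub>R ?b + h *\<^sub>R ?a) - F (x + h *\<^sub>R ?b) - F (x + h *\<^sub>R ?a) + F x
         = h * (h * ?BA (x + \<sigma>2 *\<^sub>R ?b + \<tau>2 *\<^sub>R ?a))"
      using mixed_difference_mvt[OF F h, of x k i] square by blast
    have swap: "x + h *\<^sub>R ?b + h *\<^sub>R ?a = x + h *\<^sub>R ?a + h *\<^sub>R ?b"
      by (simp add: algebra_simps)
    have "h * (h * ?AB (x + \<sigma>1 *\<^sub>R ?a + \<tau>1 *\<^sub>R ?b)) =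
        h * (h * ?BA (x + \<sigma>2 *\<^sub>R ?b + \<tau>2 *\<^sub>R ?a))"
      using st1(3) st2(3) unfolding swap by linarith
    then have "?AB (x + \<sigma>1 *\<^sub>R ?a + \<tau>1 *\<^sub>R ?b) = ?BA (x + \<sigma>2 *\<^sub>R ?b + \<tau>2 *\<^sub>R ?a)"
      using h by simp
    moreover have "dist (?AB (x + \<sigma>1 *\<^sub>R ?a + \<tau>1 *\<^sub>R ?b)) (?AB x) < \<epsilon>"
      using d(3) square[of \<sigma>1 \<tau>1 i k] st1(1,2) by simp
    moreover have "dist (?BA (x + \<sigma>2 *\<^sub>R ?b + \<tau>2 *\<^sub>R ?a)) (?BA x) < \<epsilon>"
      using d(4) square[of \<sigma>2 \<tau>2 k i] st2(1,2) by simp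
    ultimately show ?thesis by (simp add: dist_real_def)
  qed
  show ?thesis
  proof (rule ccontr)
    assume "?AB x \<noteq> ?BA x"
    then have "\<bar>?AB x - ?BA x\<bar> / 4 > 0" by simp
    from close[OF this] show False by (simp add: field_simps)
  qed
qed

section \<open>Normal jets on the boundary\<close>

text \<open>\<open>normal_jet_zero j F\<close>: \<open>F = \<O>((x\<^sup>n)\<^sup>j\<^sup>+\<^sup>1)\<close> on \<open>\<Gamma>\<close>, i.e. the normal derivatives of order
  \<open>0, \<dots>, j\<close> vanish there.\<close>
definition normal_jet_zero :: "nat \<Rightarrow> (real^'n \<Rightarrow> real) \<Rightarrow> bool" where
  "normal_jet_zero j F \<longleftrightarrow> (\<forall>m\<le>j. \<forall>x\<in>\<Omega>. x $ nn = 0 \<longrightarrow> pds \<Omega> (replicate m nn) F x = 0)"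

lemma normal_jet_zero_0_iff: "normal_jet_zero 0 F \<longleftrightarrow> (\<forall>x\<in>\<Omega>. x $ nn = 0 \<longrightarrow> F x = 0)"
  unfolding normal_jet_zero_def by auto

lemma normal_jet_zero_Suc_iff:
  "normal_jet_zero (Suc j) F \<longleftrightarrow>
     (\<forall>x\<in>\<Omega>. x $ nn = 0 \<longrightarrow> F x = 0) \<and> normal_jet_zero j (pd \<Omega> nn F)"
proof -
  have "(\<forall>m\<le>Suc j. P m) \<longleftrightarrow> P 0 \<and> (\<forall>m\<le>j. P (Suc m))" for P :: "nat \<Rightarrow> bool"
    by (metis Suc_le_mono le0 not0_implies_Suc)
  then show ?thesis unfolding normal_jet_zero_def by (simp add: pds_replicate_Suc del: replicate_Suc)
qed

lemma normal_jet_zero_Suc_imp: "normal_jet_zero (Suc j) F \<Longrightarrow> normal_jet_zero j F"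
  unfolding normal_jet_zero_def by auto

lemma normal_jet_zero_cong:
  "normal_jet_zero j F \<Longrightarrow> \<forall>y\<in>\<Omega>. F y = G y \<Longrightarrow> normal_jet_zero j G"
  unfolding normal_jet_zero_def using pds_cong by metis

lemma normal_jet_zero_lin:
  "smooth_on \<Omega> F \<Longrightarrow> smooth_on \<Omega> G \<Longrightarrow> normal_jet_zero j F \<Longrightarrow> normal_jet_zero j G \<Longrightarrow>
    normal_jet_zero j (\<lambda>y. a * F y + b * G y)"
  unfolding normal_jet_zero_def using pds_lin by simp

lemma normal_jet_zero_mult:
  "normal_jet_zero j F \<Longrightarrow> smooth_on \<Omega> F \<Longrightarrow> smooth_on \<Omega> G \<Longrightarrow>
    normal_jet_zero j (\<lambda>y. F y * G y)"
proof (induction j arbitrary: F G)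
  case 0
  then show ?case unfolding normal_jet_zero_0_iff by simp
next
  case (Suc j)
  have "normal_jet_zero j (\<lambda>y. 1 * (pd \<Omega> nn F y * G y) + 1 * (F y * pd \<Omega> nn G y))"
    using Suc normal_jet_zero_Suc_imp
    by (intro normal_jet_zero_lin Suc.IH smooth_on_mult smooth_on_pd)
      (auto simp: normal_jet_zero_Suc_iff)
  moreover have "\<forall>y\<in>\<Omega>. 1 * (pd \<Omega> nn F y * G y) + 1 * (F y * pd \<Omega> nn G y) =
      pd \<Omega> nn (\<lambda>y. F y * G y) y"
    using pd_mult smooth_on_imp_has_pd Suc.prems by simp
  ultimately show ?case
    using Suc.prems(1) normal_jet_zero_cong unfolding normal_jet_zero_Suc_iff by auto
qed

lemma pd_tangential_eq_0:
  assumes "\<forall>y\<in>\<Omega>. y $ nn = 0 \<longrightarrow> F y = 0" "x \<in> \<Omega>" "x $ nn = 0" "k \<noteq> nn"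
  shows "pd \<Omega> k F x = 0"
proof -
  have "((\<lambda>t. F (x + t *\<^sub>R axis k 1)) has_real_derivative 0)
          (at 0 within {t. x + t *\<^sub>R axis k 1 \<in> \<Omega>})"
  proof (rule has_field_derivative_transform_within[OF DERIV_const[of 0], of 1])
    fix t :: real assume "t \<in> {t. x + t *\<^sub>R axis k 1 \<in> \<Omega>}"
    moreover have "(x + t *\<^sub>R axis k 1) $ nn = 0" using assms by (auto simp: axis_def)
    ultimately show "0 = F (x + t *\<^sub>R axis k 1)" using assms by auto
  qed (use assms in auto)
  then show ?thesis using pd_eqI assms by blast
qed

text \<open>Tangential derivatives commute with the normal ones, so they preserve the vanishing of
  the normal jet.\<close>
lemma normal_jet_zero_pd_tangential:
  "normal_jet_zero j F \<Longrightarrow> smooth_on \<Omega> F \<Longrightarrow> k \<noteq> nn \<Longrightarrow> normal_jet_zero j (pd \<Omega> k F)"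
proof (induction j arbitrary: F)
  case 0
  then show ?case unfolding normal_jet_zero_0_iff using pd_tangential_eq_0 by blast
next
  case (Suc j)
  have "normal_jet_zero j (pd \<Omega> k (pd \<Omega> nn F))"
    using Suc smooth_on_pd unfolding normal_jet_zero_Suc_iff by blast
  then have "normal_jet_zero j (pd \<Omega> nn (pd \<Omega> k F))"
    using normal_jet_zero_cong pd_pd_commute Suc.prems(2) by blast
  then show ?case
    using Suc.prems pd_tangential_eq_0 unfolding normal_jet_zero_Suc_iff by blast
qed

lemma pds_eq_0_interior:
  assumes "\<forall>y\<in>\<Omega>. y $ nn > 0 \<longrightarrow> F y = 0" "y \<in> \<Omega>" "y $ nn > 0"
  shows "pds \<Omega> is F y = 0"
  using assms(2,3)
proof (induction "is" arbitrary: y)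
  case (Cons i "is")
  have "((\<lambda>t. pds \<Omega> is F (y + t *\<^sub>R axis i 1)) has_real_derivative 0)
          (at 0 within {t. y + t *\<^sub>R axis i 1 \<in> \<Omega>})"
  proof (rule has_field_derivative_transform_within[OF DERIV_const[of 0] Cons.prems(2)])
    fix t :: real assume t: "t \<in> {t. y + t *\<^sub>R axis i 1 \<in> \<Omega>}" "dist t 0 < y $ nn"
    have "(y + t *\<^sub>R axis i 1) $ nn \<ge> y $ nn - \<bar>t\<bar>" by (auto simp: axis_def)
    then show "0 = pds \<Omega> is F (y + t *\<^sub>R axis i 1)" using Cons.IH t by auto
  qed (use Cons.prems in auto)
  then show ?case using pd_eqI Cons.prems by auto
qed (use assms in auto)

lemma continuous_eq_0_of_interior:
  fixes g :: "real^'n \<Rightarrow> real"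
  assumes "continuous_on \<Omega> g" "\<forall>y\<in>\<Omega>. y $ nn > 0 \<longrightarrow> g y = 0" "x \<in> \<Omega>"
  shows "g x = 0"
proof (rule ccontr)
  assume "g x \<noteq> 0"
  then obtain d where d: "d > 0" "\<forall>y\<in>\<Omega>. dist y x < d \<longrightarrow> dist (g y) (g x) < \<bar>g x\<bar>"
    using assms(1,3) unfolding continuous_on_iff by (metis zero_less_abs_iff)
  obtain e where e: "e > 0" "\<forall>y. y $ nn \<ge> 0 \<longrightarrow> dist y x < e \<longrightarrow> y \<in> \<Omega>"
    using half_ball_subset assms(3) by blast
  define y where "y = x + (min d e / 2) *\<^sub>R axis nn 1"
  have "y $ nn > 0" "dist y x < d" "dist y x < e"
    using normal_coordinate_nonneg[OF assms(3)] d e by (auto simp: y_def dist_norm)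
  then show False using assms(2) d e by fastforce
qed

lemma normal_jet_zero_of_interior:
  "smooth_on \<Omega> F \<Longrightarrow> \<forall>y\<in>\<Omega>. y $ nn > 0 \<longrightarrow> F y = 0 \<Longrightarrow> normal_jet_zero j F"
  unfolding normal_jet_zero_def
  using continuous_eq_0_of_interior[OF smooth_on_imp_continuous_on[OF smooth_on_pds]]
    pds_eq_0_interior by blast

definition normal_jets_agree :: "nat \<Rightarrow> (real^'n \<Rightarrow> real) \<Rightarrow> (real^'n \<Rightarrow> real) \<Rightarrow> bool" where
  "normal_jets_agree j F G \<longleftrightarrow>
     smooth_on \<Omega> F \<and> smooth_on \<Omega> G \<and> normal_jet_zero j (\<lambda>y. F y - G y)"

lemma normal_jets_agree_refl: "smooth_on \<Omega> F \<Longrightarrow> normal_jets_agree j F F"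
  unfolding normal_jets_agree_def using normal_jet_zero_of_interior[OF smooth_on_const] by simp

lemma normal_jets_agree_of_interior:
  "smooth_on \<Omega> F \<Longrightarrow> smooth_on \<Omega> G \<Longrightarrow> \<forall>y\<in>\<Omega>. y $ nn > 0 \<longrightarrow> F y = G y \<Longrightarrow>
    normal_jets_agree j F G"
  unfolding normal_jets_agree_def by (auto intro: normal_jet_zero_of_interior smooth_on_diff)

lemma normal_jets_agree_const: "normal_jets_agree j (\<lambda>_. c) (\<lambda>_. c)"
  by (rule normal_jets_agree_refl[OF smooth_on_const])

lemma normal_jets_agree_cong:
  "normal_jets_agree j F G \<Longrightarrow> \<forall>y\<in>\<Omega>. F y = F' y \<Longrightarrow> \<forall>y\<in>\<Omega>. G y = G' y \<Longrightarrow>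
    normal_jets_agree j F' G'"
  unfolding normal_jets_agree_def using smooth_on_cong normal_jet_zero_cong by (smt (verit))

lemma normal_jets_agree_Suc_imp: "normal_jets_agree (Suc j) F G \<Longrightarrow> normal_jets_agree j F G"
  unfolding normal_jets_agree_def using normal_jet_zero_Suc_imp by blast

lemma normal_jets_agree_mono: "i \<le> j \<Longrightarrow> normal_jets_agree j F G \<Longrightarrow> normal_jets_agree i F G"
  unfolding normal_jets_agree_def normal_jet_zero_def by auto

lemma normal_jets_agree_lin:
  assumes "normal_jets_agree j F1 F2" "normal_jets_agree j G1 G2"
  shows "normal_jets_agree j (\<lambda>y. a * F1 y + b * G1 y) (\<lambda>y. a * F2 y + b * G2 y)"
proof -
  have "normal_jet_zero j (\<lambda>y. a * (F1 y - F2 y) + b * (G1 y - G2 y))"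
    using assms unfolding normal_jets_agree_def by (intro normal_jet_zero_lin smooth_on_diff) auto
  moreover have "(\<lambda>y. a * (F1 y - F2 y) + b * (G1 y - G2 y)) =
      (\<lambda>y. (a * F1 y + b * G1 y) - (a * F2 y + b * G2 y))"
    by (simp add: algebra_simps)
  ultimately show ?thesis using assms unfolding normal_jets_agree_def by (auto intro: smooth_on_lin)
qed

lemma normal_jets_agree_add:
  "normal_jets_agree j F1 F2 \<Longrightarrow> normal_jets_agree j G1 G2 \<Longrightarrow>
    normal_jets_agree j (\<lambda>y. F1 y + G1 y) (\<lambda>y. F2 y + G2 y)"
  using normal_jets_agree_lin[of j F1 F2 G1 G2 1 1] by simp

lemma normal_jets_agree_diff:
  "normal_jets_agree j F1 F2 \<Longrightarrow> normal_jets_agree j G1 G2 \<Longrightarrow>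
    normal_jets_agree j (\<lambda>y. F1 y - G1 y) (\<lambda>y. F2 y - G2 y)"
  using normal_jets_agree_lin[of j F1 F2 G1 G2 1 "-1"] by simp

lemma normal_jets_agree_minus:
  "normal_jets_agree j F1 F2 \<Longrightarrow> normal_jets_agree j (\<lambda>y. - F1 y) (\<lambda>y. - F2 y)"
  using normal_jets_agree_lin[of j F1 F2 F1 F2 "-1" 0] by simp

lemma normal_jets_agree_mult:
  assumes "normal_jets_agree j F1 F2" "normal_jets_agree j G1 G2"
  shows "normal_jets_agree j (\<lambda>y. F1 y * G1 y) (\<lambda>y. F2 y * G2 y)"
proof -
  have "normal_jet_zero j (\<lambda>y. 1 * ((F1 y - F2 y) * G1 y) + 1 * ((G1 y - G2 y) * F2 y))"
    using assms unfolding normal_jets_agree_def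
    by (intro normal_jet_zero_lin normal_jet_zero_mult smooth_on_mult smooth_on_diff) auto
  moreover have "(\<lambda>y. 1 * ((F1 y - F2 y) * G1 y) + 1 * ((G1 y - G2 y) * F2 y)) =
      (\<lambda>y. F1 y * G1 y - F2 y * G2 y)"
    by (simp add: algebra_simps)
  ultimately show ?thesis
    using assms unfolding normal_jets_agree_def by (auto intro: smooth_on_mult)
qed

lemma normal_jets_agree_inverse:
  assumes "normal_jets_agree j F1 F2" "\<forall>y\<in>\<Omega>. F1 y \<noteq> 0" "\<forall>y\<in>\<Omega>. F2 y \<noteq> 0"
  shows "normal_jets_agree j (\<lambda>y. inverse (F1 y)) (\<lambda>y. inverse (F2 y))"
proof -
  have smooth: "smooth_on \<Omega> F1" "smooth_on \<Omega> F2"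
    "smooth_on \<Omega> (\<lambda>y. inverse (F1 y))" "smooth_on \<Omega> (\<lambda>y. inverse (F2 y))"
    using assms smooth_on_inverse unfolding normal_jets_agree_def by auto
  have "normal_jet_zero j (\<lambda>y. (-1) * (F1 y - F2 y) + 0 * (F1 y - F2 y))"
    using assms(1) smooth unfolding normal_jets_agree_def
    by (intro normal_jet_zero_lin smooth_on_diff) auto
  then have "normal_jet_zero j (\<lambda>y. (F2 y - F1 y) * (inverse (F1 y) * inverse (F2 y)))"
    using smooth by (intro normal_jet_zero_mult smooth_on_diff smooth_on_mult) auto
  moreover have "\<forall>y\<in>\<Omega>. (F2 y - F1 y) * (inverse (F1 y) * inverse (F2 y)) =
      inverse (F1 y) - inverse (F2 y)"
    using assms by (auto simp: field_simps)
  ultimately have "normal_jet_zero j (\<lambda>y. inverse (F1 y) - inverse (F2 y))"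
    by (rule normal_jet_zero_cong)
  then show ?thesis using smooth unfolding normal_jets_agree_def by blast
qed

lemma normal_jets_agree_pd_tangential:
  assumes "normal_jets_agree j F G" "k \<noteq> nn"
  shows "normal_jets_agree j (pd \<Omega> k F) (pd \<Omega> k G)"
proof -
  have smooth: "smooth_on \<Omega> F" "smooth_on \<Omega> G" using assms unfolding normal_jets_agree_def by auto
  then have "normal_jet_zero j (pd \<Omega> k (\<lambda>y. F y - G y))"
    using assms normal_jet_zero_pd_tangential smooth_on_diff unfolding normal_jets_agree_def by blast
  then show ?thesis
    using smooth smooth_on_pd normal_jet_zero_cong pd_diff unfolding normal_jets_agree_def
    by (metis (no_types, lifting))
qed

lemma normal_jets_agree_pd_normal:
  assumes "normal_jets_agree (Suc j) F G"
  shows "normal_jets_agree j (pd \<Omega> nn F) (pd \<Omega> nn G)"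
proof -
  have smooth: "smooth_on \<Omega> F" "smooth_on \<Omega> G" using assms unfolding normal_jets_agree_def by auto
  have "normal_jet_zero j (pd \<Omega> nn (\<lambda>y. F y - G y))"
    using assms unfolding normal_jets_agree_def normal_jet_zero_Suc_iff by blast
  then show ?thesis
    using smooth smooth_on_pd normal_jet_zero_cong pd_diff unfolding normal_jets_agree_def
    by (metis (no_types, lifting))
qed

lemma normal_jets_agree_pd:
  "normal_jets_agree (Suc j) F G \<Longrightarrow> normal_jets_agree j (pd \<Omega> i F) (pd \<Omega> i G)"
  by (cases "i = nn")
    (auto intro: normal_jets_agree_pd_normal normal_jets_agree_pd_tangential normal_jets_agree_Suc_imp)

lemma normal_jets_agree_Suc_iff:
  "normal_jets_agree (Suc j) F G \<longleftrightarrow>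
     normal_jets_agree 0 F G \<and> normal_jets_agree j (pd \<Omega> nn F) (pd \<Omega> nn G)"
proof -
  have "normal_jet_zero j (pd \<Omega> nn (\<lambda>y. F y - G y)) \<longleftrightarrow>
      normal_jet_zero j (\<lambda>y. pd \<Omega> nn F y - pd \<Omega> nn G y)"
    if "smooth_on \<Omega> F" "smooth_on \<Omega> G"
    using normal_jet_zero_cong pd_diff[OF that] by (metis (no_types, lifting))
  then show ?thesis
    unfolding normal_jets_agree_def normal_jet_zero_Suc_iff normal_jet_zero_0_iff
    using smooth_on_pd by blast
qed

lemma normal_jets_agree_0_iff:
  "normal_jets_agree 0 F G \<longleftrightarrow>
     smooth_on \<Omega> F \<and> smooth_on \<Omega> G \<and> (\<forall>x\<in>\<Omega>. x $ nn = 0 \<longrightarrow> F x = G x)"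
  unfolding normal_jets_agree_def normal_jet_zero_0_iff by simp

lemma normal_jets_agree_sqrt:
  assumes "normal_jets_agree j F1 F2" "\<forall>y\<in>\<Omega>. F1 y \<noteq> 0" "\<forall>y\<in>\<Omega>. F2 y \<noteq> 0"
  shows "normal_jets_agree j (\<lambda>y. sqrt (F1 y)) (\<lambda>y. sqrt (F2 y))"
  using assms(1)
proof (induction j)
  case 0
  then show ?case using assms(2,3) smooth_on_sqrt unfolding normal_jets_agree_0_iff by simp
next
  case (Suc j)
  have F: "normal_jets_agree j F1 F2" "smooth_on \<Omega> F1" "smooth_on \<Omega> F2"
    using Suc.prems normal_jets_agree_Suc_imp unfolding normal_jets_agree_def by auto
  have "normal_jets_agree j
      (\<lambda>y. pd \<Omega> nn F1 y * ((sqrt (F1 y) * inverse (F1 y)) * (\<lambda>_. 1/2) y))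
      (\<lambda>y. pd \<Omega> nn F2 y * ((sqrt (F2 y) * inverse (F2 y)) * (\<lambda>_. 1/2) y))"
    by (intro normal_jets_agree_mult normal_jets_agree_pd_normal normal_jets_agree_const
        normal_jets_agree_inverse Suc.prems Suc.IH F(1) assms(2,3))
  then have "normal_jets_agree j (pd \<Omega> nn (\<lambda>y. sqrt (F1 y))) (pd \<Omega> nn (\<lambda>y. sqrt (F2 y)))"
    by (rule normal_jets_agree_cong) (use pd_sqrt smooth_on_imp_has_pd F assms(2,3) in auto)
  moreover have "normal_jets_agree 0 (\<lambda>y. sqrt (F1 y)) (\<lambda>y. sqrt (F2 y))"
    using Suc.prems assms(2,3) smooth_on_sqrt
    unfolding normal_jets_agree_Suc_iff[of j] normal_jets_agree_0_iff by simp
  ultimately show ?case unfolding normal_jets_agree_Suc_iff[of j] by blast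
qed

lemma normal_jets_agree_sum:
  "finite A \<Longrightarrow> \<forall>l\<in>A. normal_jets_agree j (F1 l) (F2 l) \<Longrightarrow>
    normal_jets_agree j (\<lambda>y. \<Sum>l\<in>A. F1 l y) (\<lambda>y. \<Sum>l\<in>A. F2 l y)"
  by (induction A rule: finite_induct)
    (auto intro: normal_jets_agree_add simp: normal_jets_agree_const[of j 0, simplified])

lemma normal_jets_agree_prod:
  "finite A \<Longrightarrow> \<forall>l\<in>A. normal_jets_agree j (F1 l) (F2 l) \<Longrightarrow>
    normal_jets_agree j (\<lambda>y. \<Prod>l\<in>A. F1 l y) (\<lambda>y. \<Prod>l\<in>A. F2 l y)"
  by (induction A rule: finite_induct)
    (auto intro: normal_jets_agree_mult simp: normal_jets_agree_const[of j 1, simplified])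

text \<open>\<open>F = G + \<O>((x\<^sup>n)\<^sup>\<infinity>)\<close> on \<open>\<Gamma>\<close>, for smooth \<open>F\<close> and \<open>G\<close>.\<close>
definition agree_to_infinite_order :: "(real^'n \<Rightarrow> real) \<Rightarrow> (real^'n \<Rightarrow> real) \<Rightarrow> bool" where
  "agree_to_infinite_order F G \<longleftrightarrow> (\<forall>j. normal_jets_agree j F G)"

lemma agree_to_infinite_order_smooth:
  "agree_to_infinite_order F G \<Longrightarrow> smooth_on \<Omega> F"
  "agree_to_infinite_order F G \<Longrightarrow> smooth_on \<Omega> G"
  unfolding agree_to_infinite_order_def normal_jets_agree_def by auto

lemma normal_jets_agree_if_agree_to_infinite_order:
  "agree_to_infinite_order F G \<Longrightarrow> normal_jets_agree j F G"
  unfolding agree_to_infinite_order_def by blast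

lemma agree_to_infinite_order_refl: "smooth_on \<Omega> F \<Longrightarrow> agree_to_infinite_order F F"
  unfolding agree_to_infinite_order_def using normal_jets_agree_refl by blast

lemma agree_to_infinite_order_const: "agree_to_infinite_order (\<lambda>_. c) (\<lambda>_. c)"
  unfolding agree_to_infinite_order_def using normal_jets_agree_const by blast

lemma agree_to_infinite_order_cong:
  "agree_to_infinite_order F G \<Longrightarrow> \<forall>y\<in>\<Omega>. F y = F' y \<Longrightarrow> \<forall>y\<in>\<Omega>. G y = G' y \<Longrightarrow>
    agree_to_infinite_order F' G'"
  unfolding agree_to_infinite_order_def using normal_jets_agree_cong by blast

lemma agree_to_infinite_order_add:
  "agree_to_infinite_order F1 F2 \<Longrightarrow> agree_to_infinite_order G1 G2 \<Longrightarrow>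
    agree_to_infinite_order (\<lambda>y. F1 y + G1 y) (\<lambda>y. F2 y + G2 y)"
  unfolding agree_to_infinite_order_def using normal_jets_agree_add by blast

lemma agree_to_infinite_order_diff:
  "agree_to_infinite_order F1 F2 \<Longrightarrow> agree_to_infinite_order G1 G2 \<Longrightarrow>
    agree_to_infinite_order (\<lambda>y. F1 y - G1 y) (\<lambda>y. F2 y - G2 y)"
  unfolding agree_to_infinite_order_def using normal_jets_agree_diff by blast

lemma agree_to_infinite_order_minus:
  "agree_to_infinite_order F1 F2 \<Longrightarrow> agree_to_infinite_order (\<lambda>y. - F1 y) (\<lambda>y. - F2 y)"
  unfolding agree_to_infinite_order_def using normal_jets_agree_minus by blast

lemma agree_to_infinite_order_mult:
  "agree_to_infinite_order F1 F2 \<Longrightarrow> agree_to_infinite_order G1 G2 \<Longrightarrow>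
    agree_to_infinite_order (\<lambda>y. F1 y * G1 y) (\<lambda>y. F2 y * G2 y)"
  unfolding agree_to_infinite_order_def using normal_jets_agree_mult by blast

lemma agree_to_infinite_order_inverse:
  "agree_to_infinite_order F1 F2 \<Longrightarrow> \<forall>y\<in>\<Omega>. F1 y \<noteq> 0 \<Longrightarrow> \<forall>y\<in>\<Omega>. F2 y \<noteq> 0 \<Longrightarrow>
    agree_to_infinite_order (\<lambda>y. inverse (F1 y)) (\<lambda>y. inverse (F2 y))"
  unfolding agree_to_infinite_order_def using normal_jets_agree_inverse by blast

lemma agree_to_infinite_order_divide:
  "agree_to_infinite_order F1 F2 \<Longrightarrow> agree_to_infinite_order G1 G2 \<Longrightarrow>
    \<forall>y\<in>\<Omega>. G1 y \<noteq> 0 \<Longrightarrow> \<forall>y\<in>\<Omega>. G2 y \<noteq> 0 \<Longrightarrow>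
    agree_to_infinite_order (\<lambda>y. F1 y / G1 y) (\<lambda>y. F2 y / G2 y)"
  using agree_to_infinite_order_mult[OF _ agree_to_infinite_order_inverse]
  by (simp add: divide_inverse)

lemma agree_to_infinite_order_sqrt:
  "agree_to_infinite_order F1 F2 \<Longrightarrow> \<forall>y\<in>\<Omega>. F1 y \<noteq> 0 \<Longrightarrow> \<forall>y\<in>\<Omega>. F2 y \<noteq> 0 \<Longrightarrow>
    agree_to_infinite_order (\<lambda>y. sqrt (F1 y)) (\<lambda>y. sqrt (F2 y))"
  unfolding agree_to_infinite_order_def using normal_jets_agree_sqrt by blast

lemma agree_to_infinite_order_pd:
  "agree_to_infinite_order F G \<Longrightarrow> agree_to_infinite_order (pd \<Omega> i F) (pd \<Omega> i G)"
  unfolding agree_to_infinite_order_def using normal_jets_agree_pd by blast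

lemma agree_to_infinite_order_sum:
  "finite A \<Longrightarrow> \<forall>l\<in>A. agree_to_infinite_order (F1 l) (F2 l) \<Longrightarrow>
    agree_to_infinite_order (\<lambda>y. \<Sum>l\<in>A. F1 l y) (\<lambda>y. \<Sum>l\<in>A. F2 l y)"
  unfolding agree_to_infinite_order_def using normal_jets_agree_sum by blast

lemma agree_to_infinite_order_prod:
  "finite A \<Longrightarrow> \<forall>l\<in>A. agree_to_infinite_order (F1 l) (F2 l) \<Longrightarrow>
    agree_to_infinite_order (\<lambda>y. \<Prod>l\<in>A. F1 l y) (\<lambda>y. \<Prod>l\<in>A. F2 l y)"
  unfolding agree_to_infinite_order_def using normal_jets_agree_prod by blast

lemma agree_to_infinite_order_det:
  fixes M1 M2 :: "real^'n \<Rightarrow> real^'n^'n"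
  assumes "\<forall>r c. agree_to_infinite_order (\<lambda>y. M1 y $ r $ c) (\<lambda>y. M2 y $ r $ c)"
  shows "agree_to_infinite_order (\<lambda>y. det (M1 y)) (\<lambda>y. det (M2 y))"
  unfolding det_def using assms
  by (intro agree_to_infinite_order_sum agree_to_infinite_order_mult agree_to_infinite_order_prod
      agree_to_infinite_order_const ballI) (auto intro: finite_permutations)

end

section \<open>Inverse and determinant of a positive definite matrix\<close>

lemma det_nonzero_if_pos_def:
  fixes A :: "real^'n^'n"
  assumes "\<forall>v. v \<noteq> 0 \<longrightarrow> v \<bullet> (A *v v) > 0"
  shows "det A \<noteq> 0"
proof -
  have "inj ((*v) A)"
  proof (rule injI)
    fix v w assume "A *v v = A *v w"
    then have "A *v (v - w) = 0" by (simp add: matrix_vector_mult_diff_distrib)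
    then show "v = w" using assms[rule_format, of "v - w"] by auto
  qed
  then show ?thesis using det_nz_iff_inj[of "(*v) A"] by simp
qed

lemma riem_metric_det_nonzero: "riem_metric \<Omega> H \<Longrightarrow> \<forall>y\<in>\<Omega>. det (H y) \<noteq> 0"
  unfolding riem_metric_def using det_nonzero_if_pos_def by blast

lemma matrix_inv_mult:
  fixes A :: "real^'n^'n"
  assumes "det A \<noteq> 0"
  shows "A ** matrix_inv A = mat 1" "matrix_inv A ** A = mat 1"
proof -
  have "invertible A" using assms invertible_det_nz by blast
  then have "A ** matrix_inv A = mat 1 \<and> matrix_inv A ** A = mat 1"
    unfolding invertible_def matrix_inv_def by (rule someI_ex)
  then show "A ** matrix_inv A = mat 1" "matrix_inv A ** A = mat 1" by auto
qed

definition replace_column_axis :: "real^'n^'n \<Rightarrow> 'n \<Rightarrow> 'n \<Rightarrow> real^'n^'n" where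
  "replace_column_axis A a b = (\<chi> r c. if c = a then (if r = b then 1 else 0) else A $ r $ c)"

lemma matrix_inv_cramer:
  fixes A :: "real^'n^'n"
  assumes "det A \<noteq> 0"
  shows "matrix_inv A $ a $ b = det (replace_column_axis A a b) / det A"
proof -
  define x where "x = matrix_inv A *v axis b 1"
  have "A *v x = axis b 1"
    unfolding x_def matrix_vector_mul_assoc matrix_inv_mult(1)[OF assms] by simp
  then have "x $ a = det (\<chi> i j. if j = a then axis b 1 $ i else A $ i $ j) / det A"
    using cramer[OF assms] by auto
  moreover have "(\<chi> i j. if j = a then axis b 1 $ i else A $ i $ j) = replace_column_axis A a b"
    unfolding replace_column_axis_def by (simp add: axis_def vec_eq_iff)
  moreover have "x $ a = matrix_inv A $ a $ b"
    unfolding x_def matrix_vector_mult_basis column_def by simp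
  ultimately show ?thesis by simp
qed

lemma matrix_inv_unit_row:
  fixes A :: "real^'n^'n"
  assumes d: "det A \<noteq> 0" and unit_row: "\<forall>k. A $ n $ k = (if k = n then 1 else 0)"
  shows "matrix_inv A $ n $ a = (if a = n then 1 else 0)"
proof -
  have row: "axis n 1 v* M = (\<chi> c. M $ n $ c)" for M :: "real^'n^'n"
  proof -
    have "axis n 1 v* M = transpose M *v axis n 1" by simp
    then show ?thesis unfolding matrix_vector_mult_basis column_def transpose_def by simp
  qed
  have "axis n 1 v* A = axis n 1"
    unfolding row using unit_row by (auto simp: axis_def vec_eq_iff)
  then have "axis n 1 v* matrix_inv A = axis n 1"
    by (metis vector_matrix_mul_assoc matrix_inv_mult(1)[OF d] vector_matrix_mul_rid)
  then show ?thesis unfolding row by (auto simp: axis_def vec_eq_iff)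
qed

context half_space_domain
begin

section \<open>Agreement of the geometric quantities\<close>

context
  fixes H1 H2 :: "real^'n \<Rightarrow> real^'n^'n"
  assumes metrics_agree: "\<forall>a b. agree_to_infinite_order (\<lambda>y. H1 y $ a $ b) (\<lambda>y. H2 y $ a $ b)"
    and det1_nonzero: "\<forall>y\<in>\<Omega>. det (H1 y) \<noteq> 0" and det2_nonzero: "\<forall>y\<in>\<Omega>. det (H2 y) \<noteq> 0"
begin

lemma agree_to_infinite_order_sqrt_det:
  "agree_to_infinite_order (\<lambda>y. sqrt (det (H1 y))) (\<lambda>y. sqrt (det (H2 y)))"
  by (intro agree_to_infinite_order_sqrt agree_to_infinite_order_det metrics_agree
      det1_nonzero det2_nonzero)

lemma agree_to_infinite_order_matrix_inv:
  "agree_to_infinite_order (\<lambda>y. matrix_inv (H1 y) $ a $ b) (\<lambda>y. matrix_inv (H2 y) $ a $ b)"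
proof -
  have "agree_to_infinite_order (\<lambda>y. replace_column_axis (H1 y) a b $ r $ c)
      (\<lambda>y. replace_column_axis (H2 y) a b $ r $ c)" for r c
    using metrics_agree agree_to_infinite_order_const
    by (cases "c = a") (simp_all add: replace_column_axis_def)
  then have "agree_to_infinite_order (\<lambda>y. det (replace_column_axis (H1 y) a b) / det (H1 y))
      (\<lambda>y. det (replace_column_axis (H2 y) a b) / det (H2 y))"
    by (intro agree_to_infinite_order_divide agree_to_infinite_order_det metrics_agree
        det1_nonzero det2_nonzero allI)
  then show ?thesis
    by (rule agree_to_infinite_order_cong) (simp_all add: matrix_inv_cramer det1_nonzero det2_nonzero)
qed

lemma agree_to_infinite_order_christoffel:
  "agree_to_infinite_order (christoffel \<Omega> H1 k i j) (christoffel \<Omega> H2 k i j)"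
  unfolding christoffel_def
  by (intro agree_to_infinite_order_mult agree_to_infinite_order_const agree_to_infinite_order_sum
      agree_to_infinite_order_add agree_to_infinite_order_diff agree_to_infinite_order_pd
      agree_to_infinite_order_matrix_inv metrics_agree[rule_format] ballI finite)

lemma agree_to_infinite_order_ricci:
  "agree_to_infinite_order (ricci \<Omega> H1 i j) (ricci \<Omega> H2 i j)"
  unfolding ricci_def
  by (intro agree_to_infinite_order_mult agree_to_infinite_order_sum agree_to_infinite_order_add
      agree_to_infinite_order_diff agree_to_infinite_order_pd agree_to_infinite_order_christoffel
      ballI finite)

lemma agree_to_infinite_order_scalar_curvature:
  "agree_to_infinite_order (scalar_curvature \<Omega> H1) (scalar_curvature \<Omega> H2)"
  unfolding scalar_curvature_def
  by (intro agree_to_infinite_order_mult agree_to_infinite_order_sum agree_to_infinite_order_matrix_inv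
      agree_to_infinite_order_ricci ballI finite)

lemma agree_to_infinite_order_laplace_beltrami:
  assumes "agree_to_infinite_order f g"
  shows "agree_to_infinite_order (laplace_beltrami \<Omega> H1 f) (laplace_beltrami \<Omega> H2 g)"
  unfolding laplace_beltrami_def using det1_nonzero det2_nonzero
  by (intro agree_to_infinite_order_mult agree_to_infinite_order_divide agree_to_infinite_order_const
      agree_to_infinite_order_sum agree_to_infinite_order_pd agree_to_infinite_order_sqrt_det
      agree_to_infinite_order_matrix_inv assms ballI finite) auto

lemma agree_to_infinite_order_conformal_laplacian:
  "agree_to_infinite_order f g \<Longrightarrow>
    agree_to_infinite_order (conformal_laplacian \<Omega> H1 f) (conformal_laplacian \<Omega> H2 g)"
  unfolding conformal_laplacian_def
  by (intro agree_to_infinite_order_add agree_to_infinite_order_minus agree_to_infinite_order_mult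
      agree_to_infinite_order_const agree_to_infinite_order_laplace_beltrami
      agree_to_infinite_order_scalar_curvature)

end

lemma smooth_on_conformal_laplacian:
  assumes "riem_metric \<Omega> H" "smooth_on \<Omega> f"
  shows "smooth_on \<Omega> (conformal_laplacian \<Omega> H f)"
proof -
  have "\<forall>a b. agree_to_infinite_order (\<lambda>y. H y $ a $ b) (\<lambda>y. H y $ a $ b)"
    using assms(1) agree_to_infinite_order_refl unfolding riem_metric_def by blast
  from agree_to_infinite_order_conformal_laplacian[OF this _ _ agree_to_infinite_order_refl[OF assms(2)]]
  show ?thesis using riem_metric_det_nonzero[OF assms(1)] agree_to_infinite_order_smooth by blast
qed

section \<open>The second normal derivative in normal form\<close>

text \<open>\<open>\<partial>\<^sub>n\<^sup>2 f\<close> expressed through \<open>L\<^sub>H f\<close> and derivatives of \<open>f\<close> of lower normal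
  order, valid for metrics in normal form.\<close>
definition solved_pd_nn :: "(real^'n \<Rightarrow> real^'n^'n) \<Rightarrow> (real^'n \<Rightarrow> real) \<Rightarrow> real^'n \<Rightarrow> real" where
  "solved_pd_nn H f x = - conformal_laplacian \<Omega> H f x
     + (real CARD('n) - 2) / (4 * (real CARD('n) - 1)) * scalar_curvature \<Omega> H x * f x
     - pd \<Omega> nn (\<lambda>y. sqrt (det (H y))) x * inverse (sqrt (det (H x))) * pd \<Omega> nn f x
     - inverse (sqrt (det (H x))) *
       (\<Sum>k\<in>UNIV-{nn}. pd \<Omega> k (\<lambda>y. sqrt (det (H y)) *
          (\<Sum>j\<in>UNIV. matrix_inv (H y) $ k $ j * pd \<Omega> j f y)) x)"

text \<open>In normal form the \<open>nn\<close>-th row of \<open>H\<^sup>-\<^sup>1\<close> is the unit row, so the only second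
  normal derivative in the Laplace--Beltrami operator is \<open>\<partial>\<^sub>n\<^sup>2 f\<close>, with coefficient 1.\<close>
lemma pd_nn_eq_solved_pd_nn:
  fixes H :: "real^'n \<Rightarrow> real^'n^'n"
  assumes H: "\<forall>a b. smooth_on \<Omega> (\<lambda>y. H y $ a $ b)" "\<forall>y\<in>\<Omega>. det (H y) \<noteq> 0"
    "normal_form_metric nn \<Omega> H"
    and f: "smooth_on \<Omega> f" and x: "x \<in> \<Omega>"
  shows "pd \<Omega> nn (pd \<Omega> nn f) x = solved_pd_nn H f x"
proof -
  let ?s = "\<lambda>y. sqrt (det (H y))"
  let ?\<phi> = "\<lambda>k y. ?s y * (\<Sum>j\<in>UNIV. matrix_inv (H y) $ k $ j * pd \<Omega> j f y)"
  have "smooth_on \<Omega> (\<lambda>y. det (H y))"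
    using agree_to_infinite_order_smooth(1)[OF agree_to_infinite_order_det] H(1)
      agree_to_infinite_order_refl by blast
  then have s: "smooth_on \<Omega> ?s" using smooth_on_sqrt H(2) by blast
  have "\<forall>y\<in>\<Omega>. ?\<phi> nn y = ?s y * pd \<Omega> nn f y"
  proof
    fix y assume "y \<in> \<Omega>"
    then have "\<forall>k. H y $ nn $ k = (if k = nn then 1 else 0)"
      using H(3) unfolding normal_form_metric_def by auto
    then have "matrix_inv (H y) $ nn $ j = (if j = nn then 1 else 0)" for j
      using matrix_inv_unit_row H(2) \<open>y \<in> \<Omega>\<close> by blast
    then have "(\<Sum>j\<in>UNIV. matrix_inv (H y) $ nn $ j * pd \<Omega> j f y) =
        (\<Sum>j\<in>UNIV. if j = nn then pd \<Omega> j f y else 0)"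
      by (intro sum.cong) auto
    then show "?\<phi> nn y = ?s y * pd \<Omega> nn f y" by simp
  qed
  then have "pd \<Omega> nn (?\<phi> nn) x = pd \<Omega> nn (\<lambda>y. ?s y * pd \<Omega> nn f y) x"
    by (rule pd_cong[OF x])
  also have "\<dots> = pd \<Omega> nn ?s x * pd \<Omega> nn f x + ?s x * pd \<Omega> nn (pd \<Omega> nn f) x"
    using pd_mult[OF x smooth_on_imp_has_pd[OF s x] smooth_on_imp_has_pd[OF smooth_on_pd[OF f] x]]
    by simp
  finally have normal: "pd \<Omega> nn (?\<phi> nn) x =
      pd \<Omega> nn ?s x * pd \<Omega> nn f x + ?s x * pd \<Omega> nn (pd \<Omega> nn f) x" .
  have laplacian: "laplace_beltrami \<Omega> H f x =
      1 / ?s x * (pd \<Omega> nn (?\<phi> nn) x + (\<Sum>k\<in>UNIV-{nn}. pd \<Omega> k (?\<phi> k) x))"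
    unfolding laplace_beltrami_def by (simp add: sum.remove[of UNIV nn])
  have solve: "P = - (- (1 / s * (ds * df + s * P + S)) + C) + C - ds * inverse s * df - inverse s * S"
    if "s \<noteq> 0" for s P ds df S C :: real
    using that by (simp add: field_simps)
  show ?thesis
    unfolding solved_pd_nn_def conformal_laplacian_def laplacian normal
    by (rule solve) (use H(2) x in simp)
qed

context
  fixes H1 H2 :: "real^'n \<Rightarrow> real^'n^'n"
  assumes metrics_agree: "\<forall>a b. agree_to_infinite_order (\<lambda>y. H1 y $ a $ b) (\<lambda>y. H2 y $ a $ b)"
    and det1_nonzero: "\<forall>y\<in>\<Omega>. det (H1 y) \<noteq> 0" and det2_nonzero: "\<forall>y\<in>\<Omega>. det (H2 y) \<noteq> 0"
begin

lemma normal_jets_agree_solved_pd_nn: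
  assumes f: "normal_jets_agree (Suc j) f1 f2"
    and L: "normal_jets_agree j (conformal_laplacian \<Omega> H1 f1) (conformal_laplacian \<Omega> H2 f2)"
  shows "normal_jets_agree j (solved_pd_nn H1 f1) (solved_pd_nn H2 f2)"
proof -
  note geometry =
    agree_to_infinite_order_sqrt_det[OF metrics_agree det1_nonzero det2_nonzero]
    agree_to_infinite_order_scalar_curvature[OF metrics_agree det1_nonzero det2_nonzero]
    agree_to_infinite_order_matrix_inv[OF metrics_agree det1_nonzero det2_nonzero]
  have flux: "normal_jets_agree j
      (\<lambda>y. sqrt (det (H1 y)) * (\<Sum>l\<in>UNIV. matrix_inv (H1 y) $ k $ l * pd \<Omega> l f1 y))
      (\<lambda>y. sqrt (det (H2 y)) * (\<Sum>l\<in>UNIV. matrix_inv (H2 y) $ k $ l * pd \<Omega> l f2 y))" for k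
    by (intro normal_jets_agree_mult normal_jets_agree_if_agree_to_infinite_order geometry
        normal_jets_agree_sum ballI normal_jets_agree_pd[OF f] finite)
  have tangential: "normal_jets_agree j
      (\<lambda>x. \<Sum>k\<in>UNIV-{nn}. pd \<Omega> k (\<lambda>y. sqrt (det (H1 y)) *
          (\<Sum>l\<in>UNIV. matrix_inv (H1 y) $ k $ l * pd \<Omega> l f1 y)) x)
      (\<lambda>x. \<Sum>k\<in>UNIV-{nn}. pd \<Omega> k (\<lambda>y. sqrt (det (H2 y)) *
          (\<Sum>l\<in>UNIV. matrix_inv (H2 y) $ k $ l * pd \<Omega> l f2 y)) x)"
    by (rule normal_jets_agree_sum) (auto intro: normal_jets_agree_pd_tangential flux)
  have "\<forall>y\<in>\<Omega>. sqrt (det (H1 y)) \<noteq> 0" "\<forall>y\<in>\<Omega>. sqrt (det (H2 y)) \<noteq> 0"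
    using det1_nonzero det2_nonzero by auto
  then show ?thesis
    unfolding solved_pd_nn_def
    by (intro normal_jets_agree_diff normal_jets_agree_add normal_jets_agree_minus
        normal_jets_agree_mult L normal_jets_agree_const normal_jets_agree_if_agree_to_infinite_order
        geometry agree_to_infinite_order_pd agree_to_infinite_order_inverse
        normal_jets_agree_Suc_imp[OF f] normal_jets_agree_pd[OF f] tangential)
qed

lemma normal_jets_agree_Suc_Suc:
  assumes "normal_form_metric nn \<Omega> H1" "normal_form_metric nn \<Omega> H2"
    and f: "normal_jets_agree (Suc j) f1 f2"
    and L: "normal_jets_agree j (conformal_laplacian \<Omega> H1 f1) (conformal_laplacian \<Omega> H2 f2)"
  shows "normal_jets_agree (Suc (Suc j)) f1 f2"
proof -
  have smooth: "smooth_on \<Omega> f1" "smooth_on \<Omega> f2"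
    "\<forall>a b. smooth_on \<Omega> (\<lambda>y. H1 y $ a $ b)" "\<forall>a b. smooth_on \<Omega> (\<lambda>y. H2 y $ a $ b)"
    using f metrics_agree agree_to_infinite_order_smooth unfolding normal_jets_agree_def by blast+
  have "normal_jets_agree j (pd \<Omega> nn (pd \<Omega> nn f1)) (pd \<Omega> nn (pd \<Omega> nn f2))"
    using normal_jets_agree_solved_pd_nn[OF f L]
  proof (rule normal_jets_agree_cong)
    show "\<forall>y\<in>\<Omega>. solved_pd_nn H1 f1 y = pd \<Omega> nn (pd \<Omega> nn f1) y"
      using pd_nn_eq_solved_pd_nn smooth(1,3) det1_nonzero assms(1) by simp
    show "\<forall>y\<in>\<Omega>. solved_pd_nn H2 f2 y = pd \<Omega> nn (pd \<Omega> nn f2) y"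
      using pd_nn_eq_solved_pd_nn smooth(2,4) det2_nonzero assms(2) by simp
  qed
  moreover have "normal_jets_agree 0 (pd \<Omega> nn f1) (pd \<Omega> nn f2)"
    using f normal_jets_agree_mono[of 0 j] unfolding normal_jets_agree_Suc_iff[of j] by blast
  ultimately have "normal_jets_agree (Suc j) (pd \<Omega> nn f1) (pd \<Omega> nn f2)"
    unfolding normal_jets_agree_Suc_iff[of j] by blast
  then show ?thesis
    using f unfolding normal_jets_agree_Suc_iff[of "Suc j"] normal_jets_agree_Suc_iff[of j] by blast
qed

lemma agree_to_infinite_order_if_cauchy_data_agree:
  assumes "normal_form_metric nn \<Omega> H1" "normal_form_metric nn \<Omega> H2"
    and "normal_jets_agree 1 f1 f2"
    and "\<forall>j. normal_jets_agree j (conformal_laplacian \<Omega> H1 f1) (conformal_laplacian \<Omega> H2 f2)"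
  shows "agree_to_infinite_order f1 f2"
proof -
  have "normal_jets_agree (Suc j) f1 f2" for j
    by (induction j) (use assms normal_jets_agree_Suc_Suc in auto)
  then show ?thesis
    unfolding agree_to_infinite_order_def using normal_jets_agree_Suc_imp by blast
qed

end

end

theorem lemma3p4:
  fixes nn :: "'n::finite"
    and \<Omega> :: "(real^'n) set"
    and H1 H2 :: "real^'n \<Rightarrow> real^'n^'n"
    and f1 f2 :: "real^'n \<Rightarrow> real"
  assumes "openin (top_of_set (half_space nn)) \<Omega>"
    and "\<Omega> \<inter> {x. x $ nn = 0} \<noteq> {}"
    and "riem_metric \<Omega> H1" and "riem_metric \<Omega> H2"
    and "normal_form_metric nn \<Omega> H1" and "normal_form_metric nn \<Omega> H2"
    and "\<forall>j a b. \<forall>x\<in>\<Omega> \<inter> {x. x $ nn = 0}.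
           pds \<Omega> (replicate j nn) (\<lambda>y. H1 y $ a $ b - H2 y $ a $ b) x = 0"
    and "smooth_on \<Omega> f1" and "smooth_on \<Omega> f2"
    and "\<forall>x\<in>\<Omega> \<inter> {x. x $ nn > 0}. conformal_laplacian \<Omega> H1 f1 x = 0"
    and "\<forall>x\<in>\<Omega> \<inter> {x. x $ nn > 0}. conformal_laplacian \<Omega> H2 f2 x = 0"
    and "\<forall>x\<in>\<Omega> \<inter> {x. x $ nn = 0}. f1 x = f2 x"
    and "\<forall>x\<in>\<Omega> \<inter> {x. x $ nn = 0}. pd \<Omega> nn f1 x = pd \<Omega> nn f2 x"
  shows "\<forall>j. \<forall>x\<in>\<Omega> \<inter> {x. x $ nn = 0}.
           pds \<Omega> (replicate j nn) (\<lambda>y. f1 y - f2 y) x = 0"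
proof -
  interpret half_space_domain nn \<Omega> by unfold_locales (rule assms(1))
  have metrics_agree: "\<forall>a b. agree_to_infinite_order (\<lambda>y. H1 y $ a $ b) (\<lambda>y. H2 y $ a $ b)"
    using assms(3,4,7)
    unfolding riem_metric_def agree_to_infinite_order_def normal_jets_agree_def normal_jet_zero_def
    by auto
  have "\<forall>j. normal_jets_agree j (conformal_laplacian \<Omega> H1 f1) (conformal_laplacian \<Omega> H2 f2)"
    using assms(3,4,8-11)
    by (auto intro: normal_jets_agree_of_interior smooth_on_conformal_laplacian)
  moreover have "normal_jets_agree 1 f1 f2"
    using assms(8,9,12,13) smooth_on_pd
    unfolding One_nat_def normal_jets_agree_Suc_iff normal_jets_agree_0_iff by auto
  ultimately have "agree_to_infinite_order f1 f2"
    using agree_to_infinite_order_if_cauchy_data_agree[OF metrics_agree] assms(5,6)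
      riem_metric_det_nonzero assms(3,4) by blast
  then show ?thesis
    unfolding agree_to_infinite_order_def normal_jets_agree_def normal_jet_zero_def by auto
qed

end
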